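(* Assume the support set $\mathcal U\subseteq\mathbb R^n$ is nonempty, compact and convex. Then the function $f(\mathbf s,\mathbf u)$ is bounded on $\mathcal S\times\mathcal U$, and $f(\mathbf s,\mathbf u)$ is jointly convex in $\mathbf s$ and $\mathbf u$.
   Context: $n\ge1$, $T>0$, $\mathcal S=\{\mathbf s\in\mathbb R^n:\mathbf s\ge0,\sum_is_i\le T\}$; costs $\mathbf c,\mathbf d\in\mathbb R^n_+$, $C\ge0$ with $d_{i+1}-d_i\le c_{i+1}$ for $i=1,\dots,n-1$. $f(\mathbf s,\mathbf u)$ is the optimal value of the linear program $\min_{\mathbf w\in\mathbb R^{n+1},\mathbf v\in\mathbb R^n}\sum_{i=1}^n(c_iw_i+d_iv_i)+Cw_{n+1}$ s.t. $w_i-v_{i-1}=u_{i-1}+w_{i-1}-s_{i-1}$ ($i=2,\dots,n+1$), $\mathbf w\ge0,w_1=0,\mathbf v\ge0$. *)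

theory Defs
  imports "HOL-Analysis.Analysis"
begin

(* Vectors in R^n are represented as functions nat => real, with the
   meaningful components at indices 1..n (and w at indices 1..n+1). *)

definition Sset :: "nat \<Rightarrow> real \<Rightarrow> (nat \<Rightarrow> real) set" where
  "Sset n T = {s. (\<forall>i. i \<notin> {1..n} \<longrightarrow> s i = 0) \<and> (\<forall>i\<in>{1..n}. 0 \<le> s i)
                   \<and> (\<Sum>i=1..n. s i) \<le> T}"

definition lp_feasible :: "nat \<Rightarrow> (nat \<Rightarrow> real) \<Rightarrow> (nat \<Rightarrow> real)
      \<Rightarrow> ((nat \<Rightarrow> real) \<times> (nat \<Rightarrow> real)) set" where
  "lp_feasible n s u = {(w, v).
      (\<forall>i\<in>{2..n+1}. w i - v (i-1) = u (i-1) + w (i-1) - s (i-1))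
    \<and> (\<forall>i\<in>{1..n+1}. 0 \<le> w i) \<and> w 1 = 0 \<and> (\<forall>i\<in>{1..n}. 0 \<le> v i)}"

definition lp_obj :: "nat \<Rightarrow> (nat \<Rightarrow> real) \<Rightarrow> (nat \<Rightarrow> real) \<Rightarrow> real
      \<Rightarrow> (nat \<Rightarrow> real) \<Rightarrow> (nat \<Rightarrow> real) \<Rightarrow> real" where
  "lp_obj n c d C w v = (\<Sum>i=1..n. c i * w i + d i * v i) + C * w (n+1)"

definition fval :: "nat \<Rightarrow> (nat \<Rightarrow> real) \<Rightarrow> (nat \<Rightarrow> real) \<Rightarrow> real
      \<Rightarrow> (nat \<Rightarrow> real) \<Rightarrow> (nat \<Rightarrow> real) \<Rightarrow> real" where
  "fval n c d C s u = Inf ((\<lambda>(w, v). lp_obj n c d C w v) ` lp_feasible n s u)"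

end

theory Submission
  imports Defs
begin

text \<open>The feasible set of the linear program is never empty and the objective is nonnegative,
  so f is a genuine infimum of a nonempty set bounded below by 0. A convex combination of
  feasible points is feasible for the combined data and the objective is linear, which gives
  joint convexity. An explicit feasible point, whose size is controlled by T and by a uniform
  bound on the compact set U, bounds f from above.\<close>

lemma le_mult_cInf_add:
  fixes A :: "real set"
  assumes "A \<noteq> {}" "0 \<le> t" "\<And>a. a \<in> A \<Longrightarrow> z \<le> t * a + r"
  shows "z \<le> t * Inf A + r"
proof (cases "t = 0")
  case True
  then show ?thesis using assms(1,3) by force
next
  case False
  with assms(2) have "t > 0" by simp
  have "(z - r) / t \<le> Inf A"
    using assms(1,3) \<open>t > 0\<close> by (intro cInf_greatest) (auto simp: field_simps)
  then show ?thesis using \<open>t > 0\<close> by (simp add: field_simps)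
qed

lemma compact_finite_support_imp_uniformly_bounded:
  fixes U :: "('a \<Rightarrow> real) set"
  assumes "compact U" "finite I" "\<forall>u\<in>U. \<forall>i. i \<notin> I \<longrightarrow> u i = 0"
  shows "\<exists>M. \<forall>u\<in>U. \<forall>i. \<bar>u i\<bar> \<le> M"
proof -
  define h where "h u = (\<Sum>i\<in>I. \<bar>u i\<bar>)" for u :: "'a \<Rightarrow> real"
  have "continuous_on U h"
    unfolding h_def
    by (intro continuous_intros continuous_on_product_then_coordinatewise continuous_on_id)
  then have "bounded (h ` U)"
    using assms(1) by (intro compact_imp_bounded compact_continuous_image)
  then obtain M where M: "\<And>u. u \<in> U \<Longrightarrow> \<bar>h u\<bar> \<le> M"
    unfolding bounded_iff by auto
  have "\<bar>u i\<bar> \<le> M" if "u \<in> U" for u i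
  proof (cases "i \<in> I")
    case True
    then have "\<bar>u i\<bar> \<le> h u"
      unfolding h_def using assms(2) by (intro member_le_sum) auto
    then show ?thesis using M[OF that] by linarith
  next
    case False
    then show ?thesis using assms(3) M[OF that] that by auto
  qed
  then show ?thesis by blast
qed

text \<open>The increments of w are the nonnegative numbers u j + |u j| + |s j| - s j;
  v absorbs the difference to the balance equation.\<close>

lemma lp_feasible_witness:
  "(\<lambda>i. \<Sum>j=1..<i. u j + \<bar>u j\<bar> + \<bar>s j\<bar> - s j, \<lambda>j. \<bar>s j\<bar> + \<bar>u j\<bar>) \<in> lp_feasible n s u"
proof -
  define g where "g j = u j + \<bar>u j\<bar> + \<bar>s j\<bar> - s j" for j
  have g_nonneg: "g j \<ge> 0" for j
    unfolding g_def by linarith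
  have "(\<Sum>j=1..<i. g j) = (\<Sum>j=1..<i-1. g j) + g (i-1)" if "i \<in> {2..n+1}" for i
  proof -
    have "i = Suc (i-1)" "1 \<le> i - 1" using that by auto
    then show ?thesis by (metis sum.atLeastLessThan_Suc)
  qed
  then show ?thesis
    unfolding lp_feasible_def
    by (auto simp: g_def[symmetric] intro!: sum_nonneg g_nonneg) (auto simp: g_def)
qed

lemma lp_feasible_nonempty: "lp_feasible n s u \<noteq> {}"
  using lp_feasible_witness by blast

lemma lp_obj_nonneg:
  assumes "(w, v) \<in> lp_feasible n s u"
    and "\<forall>i\<in>{1..n}. 0 \<le> c i" "\<forall>i\<in>{1..n}. 0 \<le> d i" "C \<ge> 0"
  shows "0 \<le> lp_obj n c d C w v"
  using assms unfolding lp_feasible_def lp_obj_def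
  by (auto intro!: add_nonneg_nonneg sum_nonneg mult_nonneg_nonneg)

lemma lp_obj_le_uniform_bound:
  assumes "\<forall>i\<in>{1..n}. 0 \<le> c i" "\<forall>i\<in>{1..n}. 0 \<le> d i" "C \<ge> 0"
    and "\<And>i. i \<in> {1..n+1} \<Longrightarrow> w i \<le> W" "\<And>i. i \<in> {1..n} \<Longrightarrow> v i \<le> V"
  shows "lp_obj n c d C w v \<le> (\<Sum>i=1..n. c i * W + d i * V) + C * W"
  unfolding lp_obj_def
proof (rule add_mono)
  show "(\<Sum>i=1..n. c i * w i + d i * v i) \<le> (\<Sum>i=1..n. c i * W + d i * V)"
    using assms by (intro sum_mono add_mono mult_left_mono) auto
  show "C * w (n + 1) \<le> C * W"
    using assms by (intro mult_left_mono) auto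
qed

lemma lp_obj_convex_combination:
  "lp_obj n c d C (\<lambda>i. t * w1 i + (1 - t) * w2 i) (\<lambda>i. t * v1 i + (1 - t) * v2 i)
   = t * lp_obj n c d C w1 v1 + (1 - t) * lp_obj n c d C w2 v2"
proof -
  have "(\<Sum>i=1..n. c i * (t * w1 i + (1-t) * w2 i) + d i * (t * v1 i + (1-t) * v2 i))
     = (\<Sum>i=1..n. t * (c i * w1 i + d i * v1 i) + (1-t) * (c i * w2 i + d i * v2 i))"
    by (rule sum.cong) (auto simp: algebra_simps)
  also have "\<dots> = (\<Sum>i=1..n. t * (c i * w1 i + d i * v1 i)) + (\<Sum>i=1..n. (1-t) * (c i * w2 i + d i * v2 i))"
    by (rule sum.distrib)
  also have "\<dots> = t * (\<Sum>i=1..n. c i * w1 i + d i * v1 i) + (1-t) * (\<Sum>i=1..n. c i * w2 i + d i * v2 i)"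
    by (simp only: sum_distrib_left)
  finally show ?thesis
    unfolding lp_obj_def by (simp add: algebra_simps)
qed

lemma lp_feasible_convex_combination:
  assumes "(w1, v1) \<in> lp_feasible n s1 u1" "(w2, v2) \<in> lp_feasible n s2 u2" "0 \<le> t" "t \<le> 1"
  shows "((\<lambda>i. t * w1 i + (1 - t) * w2 i), (\<lambda>i. t * v1 i + (1 - t) * v2 i))
     \<in> lp_feasible n (\<lambda>i. t * s1 i + (1 - t) * s2 i) (\<lambda>i. t * u1 i + (1 - t) * u2 i)"
proof -
  have balance:
    "t * w1 i + (1 - t) * w2 i - (t * v1 (i - 1) + (1 - t) * v2 (i - 1)) =
     t * u1 (i - 1) + (1 - t) * u2 (i - 1) + (t * w1 (i - 1) + (1 - t) * w2 (i - 1)) -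
     (t * s1 (i - 1) + (1 - t) * s2 (i - 1))" if "i \<in> {2..n+1}" for i
  proof -
    have "w1 i - v1 (i-1) = u1 (i-1) + w1 (i-1) - s1 (i-1)"
         "w2 i - v2 (i-1) = u2 (i-1) + w2 (i-1) - s2 (i-1)"
      using assms(1,2) that unfolding lp_feasible_def by auto
    then have "t * (w1 i - v1 (i-1)) + (1-t) * (w2 i - v2 (i-1)) =
       t * (u1 (i-1) + w1 (i-1) - s1 (i-1)) + (1-t) * (u2 (i-1) + w2 (i-1) - s2 (i-1))"
      by simp
    then show ?thesis by (simp add: algebra_simps)
  qed
  show ?thesis
    using assms balance unfolding lp_feasible_def
    by (auto intro!: add_nonneg_nonneg mult_nonneg_nonneg)
qed

lemma fval_le_lp_obj:
  assumes "(w, v) \<in> lp_feasible n s u"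
    and "\<forall>i\<in>{1..n}. 0 \<le> c i" "\<forall>i\<in>{1..n}. 0 \<le> d i" "C \<ge> 0"
  shows "fval n c d C s u \<le> lp_obj n c d C w v"
  unfolding fval_def
proof (rule cInf_lower)
  show "lp_obj n c d C w v \<in> (\<lambda>(w, v). lp_obj n c d C w v) ` lp_feasible n s u"
    using assms(1) by force
  show "bdd_below ((\<lambda>(w, v). lp_obj n c d C w v) ` lp_feasible n s u)"
    using lp_obj_nonneg[OF _ assms(2-4)] by (auto intro: bdd_belowI[of _ 0])
qed

lemma le_mult_fval_add:
  assumes "0 \<le> t" "\<And>w v. (w, v) \<in> lp_feasible n s u \<Longrightarrow> z \<le> t * lp_obj n c d C w v + r"
  shows "z \<le> t * fval n c d C s u + r"
  unfolding fval_def
  using assms lp_feasible_nonempty[of n s u] by (intro le_mult_cInf_add) auto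

lemma fval_nonneg:
  assumes "\<forall>i\<in>{1..n}. 0 \<le> c i" "\<forall>i\<in>{1..n}. 0 \<le> d i" "C \<ge> 0"
  shows "0 \<le> fval n c d C s u"
  using le_mult_fval_add[of 1 n s u 0 c d C 0] lp_obj_nonneg[OF _ assms] by simp

lemma fval_convex:
  assumes "\<forall>i\<in>{1..n}. 0 \<le> c i" "\<forall>i\<in>{1..n}. 0 \<le> d i" "C \<ge> 0" "0 \<le> t" "t \<le> 1"
  shows "fval n c d C (\<lambda>i. t * s1 i + (1 - t) * s2 i) (\<lambda>i. t * u1 i + (1 - t) * u2 i)
           \<le> t * fval n c d C s1 u1 + (1 - t) * fval n c d C s2 u2"
proof -
  let ?f = "fval n c d C (\<lambda>i. t * s1 i + (1 - t) * s2 i) (\<lambda>i. t * u1 i + (1 - t) * u2 i)"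
  have "?f \<le> t * lp_obj n c d C w1 v1 + (1 - t) * lp_obj n c d C w2 v2"
    if "(w1, v1) \<in> lp_feasible n s1 u1" "(w2, v2) \<in> lp_feasible n s2 u2" for w1 v1 w2 v2
    using fval_le_lp_obj[OF lp_feasible_convex_combination[OF that assms(4,5)] assms(1-3)]
    by (simp add: lp_obj_convex_combination)
  then have "?f \<le> t * fval n c d C s1 u1 + (1 - t) * lp_obj n c d C w2 v2"
    if "(w2, v2) \<in> lp_feasible n s2 u2" for w2 v2
    using assms(4) that by (intro le_mult_fval_add) auto
  then have "?f \<le> (1 - t) * fval n c d C s2 u2 + t * fval n c d C s1 u1"
    using assms(5) by (intro le_mult_fval_add) (auto simp: add.commute)
  then show ?thesis by simp
qed

lemma fval_le_bound:
  assumes "s \<in> Sset n T" "\<forall>i. \<bar>u i\<bar> \<le> M"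
    and "\<forall>i\<in>{1..n}. 0 \<le> c i" "\<forall>i\<in>{1..n}. 0 \<le> d i" "C \<ge> 0"
  shows "fval n c d C s u \<le> (\<Sum>i=1..n. c i * (2 * M * n) + d i * (T + M)) + C * (2 * M * n)"
proof -
  define g where "g j = u j + \<bar>u j\<bar> + \<bar>s j\<bar> - s j" for j
  define w where "w i = (\<Sum>j=1..<i. g j)" for i
  define v where "v j = \<bar>s j\<bar> + \<bar>u j\<bar>" for j
  have feasible: "(w, v) \<in> lp_feasible n s u"
    using lp_feasible_witness[of u s n] unfolding w_def v_def g_def .
  have s_nonneg: "\<forall>i\<in>{1..n}. 0 \<le> s i" and s_sum: "(\<Sum>i=1..n. s i) \<le> T"
    using assms(1) unfolding Sset_def by auto
  have w_le: "w i \<le> 2 * M * n" if "i \<in> {1..n+1}" for i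
  proof -
    have "w i \<le> (\<Sum>j=1..n. g j)"
      unfolding w_def g_def using that by (intro sum_mono2) auto
    also have "\<dots> \<le> (\<Sum>j=1..n. 2 * M)"
      using s_nonneg assms(2) unfolding g_def by (intro sum_mono) (smt (verit) atLeastAtMost_iff)
    finally show ?thesis by (simp add: mult_ac)
  qed
  have v_le: "v i \<le> T + M" if "i \<in> {1..n}" for i
  proof -
    have "s i \<le> (\<Sum>i=1..n. s i)"
      using that s_nonneg by (intro member_le_sum) auto
    then show ?thesis
      using s_sum s_nonneg that assms(2)[rule_format, of i] unfolding v_def by auto
  qed
  show ?thesis
    using fval_le_lp_obj[OF feasible assms(3-5)] lp_obj_le_uniform_bound[where w = w and v = v, OF assms(3-5) w_le v_le]
    by linarith
qed

theorem lemma4: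
  fixes n :: nat and T C :: real and c d :: "nat \<Rightarrow> real"
    and U :: "(nat \<Rightarrow> real) set"
  assumes "n \<ge> 1" and "T > 0"
    and "\<forall>i\<in>{1..n}. 0 \<le> c i" and "\<forall>i\<in>{1..n}. 0 \<le> d i" and "C \<ge> 0"
    and "\<forall>i\<in>{1..<n}. d (i+1) - d i \<le> c (i+1)"
    and "\<forall>u\<in>U. \<forall>i. i \<notin> {1..n} \<longrightarrow> u i = 0"
    and "U \<noteq> {}" and "compact U"
    and "\<forall>x\<in>U. \<forall>y\<in>U. \<forall>t::real. 0 \<le> t \<and> t \<le> 1 \<longrightarrow> (\<lambda>i. t * x i + (1 - t) * y i) \<in> U"
  shows "(\<exists>B. \<forall>s\<in>Sset n T. \<forall>u\<in>U. \<bar>fval n c d C s u\<bar> \<le> B)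
       \<and> (\<forall>s1\<in>Sset n T. \<forall>u1\<in>U. \<forall>s2\<in>Sset n T. \<forall>u2\<in>U. \<forall>t::real. 0 \<le> t \<and> t \<le> 1 \<longrightarrow>
            fval n c d C (\<lambda>i. t * s1 i + (1 - t) * s2 i) (\<lambda>i. t * u1 i + (1 - t) * u2 i)
              \<le> t * fval n c d C s1 u1 + (1 - t) * fval n c d C s2 u2)"
proof (intro conjI)
  obtain M where M: "\<forall>u\<in>U. \<forall>i. \<bar>u i\<bar> \<le> M"
    using compact_finite_support_imp_uniformly_bounded[OF assms(9) _ assms(7)] by blast
  show "\<exists>B. \<forall>s\<in>Sset n T. \<forall>u\<in>U. \<bar>fval n c d C s u\<bar> \<le> B"
    using fval_le_bound[OF _ _ assms(3-5)] fval_nonneg[OF assms(3-5)] M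
    by (intro exI[of _ "(\<Sum>i=1..n. c i * (2 * M * n) + d i * (T + M)) + C * (2 * M * n)"]) force
  show "\<forall>s1\<in>Sset n T. \<forall>u1\<in>U. \<forall>s2\<in>Sset n T. \<forall>u2\<in>U. \<forall>t::real. 0 \<le> t \<and> t \<le> 1 \<longrightarrow>
            fval n c d C (\<lambda>i. t * s1 i + (1 - t) * s2 i) (\<lambda>i. t * u1 i + (1 - t) * u2 i)
              \<le> t * fval n c d C s1 u1 + (1 - t) * fval n c d C s2 u2"
    using fval_convex[OF assms(3-5)] by blast
qed

end
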